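(* Let $p \geq 3$ and let $\mathbf{A}$ be a spectrally unitary $\mathbb{Z}^p$-action on $\mathbb{Z}^3$ with $\mathrm{Fix}(\mathbf{A}) = \{0\}$. Then $\mathrm{Fix}(\mathbf{A}_i) = \{0\}$ for some $i$ with $1 \leq i \leq p$.
   Context: A $\mathbb{Z}^p$-action $\mathbf{A}$ on $\mathbb{Z}^q$ is spectrally unitary if it is a homomorphism from $\mathbb{Z}^p$ to the automorphism group of $\mathbb{Z}^q$ and $1$ is an eigenvalue of $\mathbf{A}(\ell)$ for every $\ell \in \mathbb{Z}^p$. For an action $\mathbf{B}$ of a group $G$ on $\mathbb{Z}^q$, $\mathrm{Fix}(\mathbf{B}) = \{k \in \mathbb{Z}^q : \mathbf{B}(g)k = k \text{ for all } g \in G\}$. For $i = 1,\dots,p$, $G_i = \{(a_1,\dots,a_p) \in \mathbb{Z}^p : a_i = 0\}$ and $\mathbf{A}_i$ denotes the restriction of $\mathbf{A}$ to the subgroup $G_i$; thus $\mathrm{Fix}(\mathbf{A}_i) = \bigcap_{j \neq i} \mathrm{Fix}(\mathbf{A}(e_j))$ where $e_1,\dots,e_p$ is the canonical basis of $\mathbb{Z}^p$. *)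

theory Defs
  imports "HOL-Analysis.Analysis"
begin

text \<open>The group Z^p, realised as integer sequences supported on indices 0..p-1
  (index i here corresponds to coordinate i+1 of the paper).\<close>
definition Zp :: "nat \<Rightarrow> (nat \<Rightarrow> int) set" where
  "Zp p = {l. \<forall>i\<ge>p. l i = 0}"

definition eigenvalue_one :: "int^3^3 \<Rightarrow> bool" where
  "eigenvalue_one M \<longleftrightarrow>
     (\<exists>v::complex^3. v \<noteq> 0 \<and> (\<chi> i j. of_int (M$i$j)) *v v = v)"

text \<open>A Z^p-action on Z^3: a homomorphism from Z^p into the automorphism group of Z^3,
  i.e. into the invertible integer 3x3 matrices (acting on column vectors).\<close>
definition action :: "nat \<Rightarrow> ((nat \<Rightarrow> int) \<Rightarrow> int^3^3) \<Rightarrow> bool" where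
  "action p A \<longleftrightarrow>
     (\<forall>l\<in>Zp p. invertible (A l)) \<and>
     (\<forall>l\<in>Zp p. \<forall>m\<in>Zp p. A (\<lambda>i. l i + m i) = A l ** A m)"

definition spectrally_unitary :: "nat \<Rightarrow> ((nat \<Rightarrow> int) \<Rightarrow> int^3^3) \<Rightarrow> bool" where
  "spectrally_unitary p A \<longleftrightarrow> action p A \<and> (\<forall>l\<in>Zp p. eigenvalue_one (A l))"

definition Fix :: "(nat \<Rightarrow> int) set \<Rightarrow> ((nat \<Rightarrow> int) \<Rightarrow> int^3^3) \<Rightarrow> (int^3) set" where
  "Fix H A = {k. \<forall>l\<in>H. A l *v k = k}"

definition G_sub :: "nat \<Rightarrow> nat \<Rightarrow> (nat \<Rightarrow> int) set" where
  "G_sub p i = {l \<in> Zp p. l i = 0}"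

end

theory Submission
  imports Defs
begin

text \<open>Suppose every Fix(A_i) contains some u_i \<noteq> 0. Since Fix(A) = {0}, the generator e_i
  moves u_i while all other generators fix it. Over the complex numbers, for the first three
  generators M_1, M_2, M_3 this forces u_1, u_2, u_3 to be linearly independent, hence a basis
  of C^3. As the M_j commute, M_i u_i is fixed by the other two generators, whose common fixed
  space is the line through u_i; so u_i is an eigenvector of M_i with eigenvalue a_i \<noteq> 1.
  The product M_1 M_2 M_3, the image of e_1 + e_2 + e_3, is then diagonal in this basis with
  eigenvalues a_1, a_2, a_3, none equal to 1, contradicting spectral unitarity.\<close>

lemma fixed_family_displacement:
  fixes M :: "'n::finite \<Rightarrow> 'a::field^'m^'m" and w :: "'n \<Rightarrow> 'a^'m"
  assumes fixed: "\<And>i j. i \<noteq> j \<Longrightarrow> M j *v w i = w i"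
  shows "M i *v (\<Sum>c\<in>UNIV. x$c *s w c) - (\<Sum>c\<in>UNIV. x$c *s w c) = x$i *s (M i *v w i - w i)"
proof -
  have "M i *v (\<Sum>c\<in>UNIV. x$c *s w c) - (\<Sum>c\<in>UNIV. x$c *s w c)
      = (\<Sum>c\<in>UNIV. x$c *s (M i *v w c - w c))"
    by (simp add: vec.sum vec.scale sum_subtractf vector_ssub_ldistrib)
  also have "\<dots> = (\<Sum>c\<in>UNIV. if c = i then x$i *s (M i *v w i - w i) else 0)"
    by (rule sum.cong) (auto simp: fixed)
  finally show ?thesis by simp
qed

lemma fixed_family_independent:
  fixes M :: "'n::finite \<Rightarrow> 'a::field^'m^'m" and w :: "'n \<Rightarrow> 'a^'m"
  assumes fixed: "\<And>i j. i \<noteq> j \<Longrightarrow> M j *v w i = w i"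
    and moved: "\<And>i. M i *v w i \<noteq> w i"
    and "(\<Sum>c\<in>UNIV. x$c *s w c) = 0"
  shows "x = 0"
proof -
  have "x$i = 0" for i
    using fixed_family_displacement[of M w i x, OF fixed] assms(3) moved[of i] by simp
  then show ?thesis by (simp add: vec_eq_iff)
qed

lemma independent_family_spans:
  fixes w :: "'n::finite \<Rightarrow> 'a::field^'n"
  assumes indep: "\<And>x. (\<Sum>c\<in>UNIV. x$c *s w c) = 0 \<Longrightarrow> x = 0"
  obtains x where "(\<Sum>c\<in>UNIV. x$c *s w c) = v"
proof -
  define W :: "'a^'n^'n" where "W = (\<chi> r c. w c $ r)"
  have W: "W *v x = (\<Sum>c\<in>UNIV. x$c *s w c)" for x
    by (simp add: matrix_mult_sum W_def column_def)
  then obtain B where "B ** W = mat 1"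
    using indep matrix_left_invertible_ker by metis
  then have "W ** B = mat 1"
    using matrix_left_right_inverse by blast
  then have "(\<Sum>c\<in>UNIV. (B *v v)$c *s w c) = v"
    by (simp flip: W add: matrix_vector_mul_assoc)
  then show thesis by (rule that)
qed

lemma commuting_fixed_family_eigenvector:
  fixes M :: "'n::finite \<Rightarrow> 'a::field^'n^'n" and w :: "'n \<Rightarrow> 'a^'n"
  assumes comm: "\<And>i j. M i ** M j = M j ** M i"
    and fixed: "\<And>i j. i \<noteq> j \<Longrightarrow> M j *v w i = w i"
    and moved: "\<And>i. M i *v w i \<noteq> w i"
  obtains a where "a \<noteq> 1" and "M i *v w i = a *s w i"
proof -
  have indep: "\<And>x. (\<Sum>c\<in>UNIV. x$c *s w c) = 0 \<Longrightarrow> x = 0"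
    using fixed_family_independent[of M w, OF fixed moved] .
  obtain y where y: "(\<Sum>c\<in>UNIV. y$c *s w c) = M i *v w i"
    by (rule independent_family_spans[OF indep])
  have "y$j = 0" if "j \<noteq> i" for j
  proof -
    have "M j *v (M i *v w i) = M i *v (M j *v w i)"
      by (metis comm matrix_vector_mul_assoc)
    also have "\<dots> = M i *v w i"
      using fixed that by simp
    finally have "y$j *s (M j *v w j - w j) = 0"
      using fixed_family_displacement[of M w j y, OF fixed] y by simp
    then show ?thesis using moved[of j] by simp
  qed
  then have "(\<Sum>c\<in>UNIV. y$c *s w c) = (\<Sum>c\<in>UNIV. if c = i then y$i *s w i else 0)"
    by (intro sum.cong) auto
  then have "M i *v w i = y$i *s w i"
    using y by simp
  moreover have "y$i \<noteq> 1" using calculation moved[of i] by auto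
  ultimately show thesis using that by blast
qed

lemma commuting_fixed_family_no_fixed_vector:
  fixes M :: "'n::finite \<Rightarrow> 'a::field^'n^'n" and w :: "'n \<Rightarrow> 'a^'n"
  assumes comm: "\<And>i j. M i ** M j = M j ** M i"
    and fixed: "\<And>i j. i \<noteq> j \<Longrightarrow> M j *v w i = w i"
    and moved: "\<And>i. M i *v w i \<noteq> w i"
    and P: "\<And>c. P *v w c = M c *v w c"
    and "P *v v = v"
  shows "v = 0"
proof -
  have indep: "\<And>x. (\<Sum>c\<in>UNIV. x$c *s w c) = 0 \<Longrightarrow> x = 0"
    using fixed_family_independent[of M w, OF fixed moved] .
  have "\<exists>a. a \<noteq> 1 \<and> P *v w c = a *s w c" for c
    using commuting_fixed_family_eigenvector[of M w c, OF comm fixed moved] P by metis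
  then obtain a where a: "\<And>c. a c \<noteq> 1" "\<And>c. P *v w c = a c *s w c"
    by metis
  obtain x where x: "(\<Sum>c\<in>UNIV. x$c *s w c) = v"
    by (rule independent_family_spans[OF indep])
  define z where "z = (\<chi> c. x$c * (a c - 1))"
  have "(\<Sum>c\<in>UNIV. z$c *s w c) = (\<Sum>c\<in>UNIV. x$c *s (P *v w c) - x$c *s w c)"
    by (intro sum.cong) (simp_all add: z_def a(2) algebra_simps)
  also have "\<dots> = P *v v - v"
    by (simp flip: x add: vec.sum vec.scale sum_subtractf)
  finally have "z = 0"
    using indep \<open>P *v v = v\<close> by simp
  then have "x = 0"
    using a(1) by (auto simp: vec_eq_iff z_def)
  then show ?thesis using x by simp
qed

definition of_int_mat :: "int^'n^'m \<Rightarrow> 'a::ring_1^'n^'m" where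
  "of_int_mat X = (\<chi> i j. of_int (X$i$j))"

definition of_int_vec :: "int^'n \<Rightarrow> 'a::ring_1^'n" where
  "of_int_vec u = (\<chi> i. of_int (u$i))"

lemma of_int_mat_mult:
  "of_int_mat (X ** Y) = (of_int_mat X ** of_int_mat Y :: 'a::comm_ring_1^'n^'m)"
  by (simp add: of_int_mat_def vec_eq_iff matrix_matrix_mult_def)

lemma of_int_mat_mult_vec:
  "of_int_mat X *v of_int_vec u = (of_int_vec (X *v u) :: 'a::comm_ring_1^'m)"
  by (simp add: of_int_mat_def of_int_vec_def vec_eq_iff matrix_vector_mult_def)

lemma of_int_vec_eq_iff [simp]:
  "(of_int_vec u :: 'a::ring_char_0^'n) = of_int_vec v \<longleftrightarrow> u = v"
  by (simp add: of_int_vec_def vec_eq_iff)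

lemma eigenvalue_one_iff:
  "eigenvalue_one M \<longleftrightarrow> (\<exists>v::complex^3. v \<noteq> 0 \<and> of_int_mat M *v v = v)"
  by (simp add: eigenvalue_one_def of_int_mat_def)

definition unit_seq :: "nat \<Rightarrow> nat \<Rightarrow> int" where
  "unit_seq i = (\<lambda>k. if k = i then 1 else 0)"

lemma unit_seq_in_Zp: "i < p \<Longrightarrow> unit_seq i \<in> Zp p"
  by (simp add: unit_seq_def Zp_def)

lemma unit_seq_in_G_sub: "j < p \<Longrightarrow> i \<noteq> j \<Longrightarrow> unit_seq j \<in> G_sub p i"
  by (simp add: unit_seq_def G_sub_def Zp_def)

lemma action_add:
  "action p A \<Longrightarrow> l \<in> Zp p \<Longrightarrow> m \<in> Zp p \<Longrightarrow> A (\<lambda>k. l k + m k) = A l ** A m"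
  by (simp add: action_def)

lemma action_commute:
  assumes "action p A" "l \<in> Zp p" "m \<in> Zp p"
  shows "A l ** A m = A m ** A l"
  using action_add[OF assms] action_add[OF assms(1,3,2)] by (simp add: add.commute)

lemma action_apply_Fix_G_sub_cong:
  assumes act: "action p A" and u: "u \<in> Fix (G_sub p i) A"
    and l: "l \<in> Zp p" and m: "m \<in> Zp p" and "l i = m i"
  shows "A l *v u = A m *v u"
proof -
  define d where "d = (\<lambda>k. l k - m k)"
  have d: "d \<in> G_sub p i"
    using l m \<open>l i = m i\<close> by (simp add: d_def G_sub_def Zp_def)
  then have "A l = A m ** A d"
    using action_add[OF act m, of d] by (simp add: d_def G_sub_def)
  then show ?thesis
    using u d by (simp add: Fix_def flip: matrix_vector_mul_assoc)
qed

lemma Fix_G_sub_unit_seq_imp_Fix_Zp: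
  assumes act: "action p A" and "i < p"
    and u: "u \<in> Fix (G_sub p i) A" and ui: "A (unit_seq i) *v u = u"
  shows "u \<in> Fix (Zp p) A"
proof -
  have ei: "unit_seq i \<in> Zp p"
    using \<open>i < p\<close> by (rule unit_seq_in_Zp)
  have "\<forall>l\<in>Zp p. l i = n \<longrightarrow> A l *v u = u" for n
  proof (induction n rule: int_induct[where k=0])
    case base
    then show ?case using u by (auto simp: Fix_def G_sub_def)
  next
    case (step1 n)
    show ?case
    proof (intro ballI impI)
      fix l assume l: "l \<in> Zp p" "l i = n + 1"
      define l' where "l' = (\<lambda>k. l k - unit_seq i k)"
      have l': "l' \<in> Zp p" "l' i = n"
        using l \<open>i < p\<close> by (auto simp: l'_def Zp_def unit_seq_def)
      have "A l = A l' ** A (unit_seq i)"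
        using action_add[OF act l'(1) ei] by (simp add: l'_def)
      then show "A l *v u = u"
        using step1.IH l' ui by (simp flip: matrix_vector_mul_assoc)
    qed
  next
    case (step2 n)
    show ?case
    proof (intro ballI impI)
      fix l assume l: "l \<in> Zp p" "l i = n - 1"
      define l' where "l' = (\<lambda>k. l k + unit_seq i k)"
      have l': "l' \<in> Zp p" "l' i = n"
        using l \<open>i < p\<close> by (auto simp: l'_def Zp_def unit_seq_def)
      have "A l' = A l ** A (unit_seq i)"
        using action_add[OF act l(1) ei] by (simp add: l'_def)
      then have "A l *v u = A l' *v u"
        using ui by (simp flip: matrix_vector_mul_assoc)
      then show "A l *v u = u"
        using step2.IH l' by simp
    qed
  qed
  then show ?thesis by (auto simp: Fix_def)
qed

definition index3 :: "3 \<Rightarrow> nat" where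
  "index3 c = (if c = 1 then 0 else if c = 2 then 1 else 2)"

lemma index3_less: "index3 c < 3"
  by (simp add: index3_def)

lemma index3_eq_iff: "index3 c = index3 d \<longleftrightarrow> c = d"
  using exhaust_3[of c] exhaust_3[of d] by (auto simp: index3_def)

lemma first_three_generators_sum_no_fixed_vector:
  fixes A :: "(nat \<Rightarrow> int) \<Rightarrow> int^3^3" and v :: "complex^3"
  assumes act: "action p A" and "p \<ge> 3"
    and u: "\<And>i. i < p \<Longrightarrow> u i \<in> Fix (G_sub p i) A"
    and moved: "\<And>i. i < p \<Longrightarrow> A (unit_seq i) *v u i \<noteq> u i"
    and "of_int_mat (A (\<lambda>k. if k < 3 then 1 else 0)) *v v = v"
  shows "v = 0"
proof -
  have ip: "index3 c < p" for c
    using index3_less[of c] \<open>p \<ge> 3\<close> by linarith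
  define l :: "nat \<Rightarrow> int" where "l = (\<lambda>k. if k < 3 then 1 else 0)"
  have l: "l \<in> Zp p"
    using \<open>p \<ge> 3\<close> by (simp add: l_def Zp_def)
  define M :: "3 \<Rightarrow> complex^3^3" where "M c = of_int_mat (A (unit_seq (index3 c)))" for c
  define w :: "3 \<Rightarrow> complex^3" where "w c = of_int_vec (u (index3 c))" for c
  show ?thesis
  proof (rule commuting_fixed_family_no_fixed_vector[of M w "of_int_mat (A l)"])
    show "M i ** M j = M j ** M i" for i j
      using action_commute[OF act unit_seq_in_Zp[OF ip] unit_seq_in_Zp[OF ip]]
      by (simp add: M_def flip: of_int_mat_mult)
    show "M j *v w i = w i" if "i \<noteq> j" for i j
      using u[OF ip] unit_seq_in_G_sub[OF ip] that
      by (simp add: M_def w_def of_int_mat_mult_vec Fix_def index3_eq_iff)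
    show "M i *v w i \<noteq> w i" for i
      using moved[OF ip] by (simp add: M_def w_def of_int_mat_mult_vec)
    show "of_int_mat (A l) *v w c = M c *v w c" for c
    proof -
      have "l (index3 c) = unit_seq (index3 c) (index3 c)"
        using index3_less[of c] by (simp add: l_def unit_seq_def)
      then have "A l *v u (index3 c) = A (unit_seq (index3 c)) *v u (index3 c)"
        using action_apply_Fix_G_sub_cong[OF act u[OF ip] l unit_seq_in_Zp[OF ip]] by blast
      then show ?thesis
        by (simp add: M_def w_def of_int_mat_mult_vec)
    qed
    show "of_int_mat (A l) *v v = v"
      using assms(5) by (simp add: l_def)
  qed
qed

theorem lemma2p7:
  fixes p :: nat and A :: "(nat \<Rightarrow> int) \<Rightarrow> int^3^3"
  assumes "p \<ge> 3"
    and "spectrally_unitary p A"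
    and "Fix (Zp p) A = {0}"
  shows "\<exists>i<p. Fix (G_sub p i) A = {0}"
proof (rule ccontr)
  assume "\<not> ?thesis"
  moreover have "0 \<in> Fix H A" for H
    by (simp add: Fix_def)
  ultimately have "\<exists>x. x \<noteq> 0 \<and> x \<in> Fix (G_sub p i) A" if "i < p" for i
    using that by blast
  then obtain u where u: "\<And>i. i < p \<Longrightarrow> u i \<noteq> 0 \<and> u i \<in> Fix (G_sub p i) A"
    by metis
  have act: "action p A" and eig: "\<And>l. l \<in> Zp p \<Longrightarrow> eigenvalue_one (A l)"
    using assms(2) by (auto simp: spectrally_unitary_def)
  have moved: "A (unit_seq i) *v u i \<noteq> u i" if "i < p" for i
    using Fix_G_sub_unit_seq_imp_Fix_Zp[OF act that] u[OF that] assms(3) by blast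
  have "(\<lambda>k. if k < 3 then 1 else 0) \<in> Zp p"
    using assms(1) by (simp add: Zp_def)
  then obtain v :: "complex^3"
    where "v \<noteq> 0" and "of_int_mat (A (\<lambda>k. if k < 3 then 1 else 0)) *v v = v"
    using eig by (auto simp: eigenvalue_one_iff)
  with first_three_generators_sum_no_fixed_vector[OF act assms(1)] u moved show False
    by blast
qed

end
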